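(* For all $0\le\lambda<1$ and $0\le d<1$ there is a number $f(\lambda,d)<1$, depending only on $\lambda$ and $d$, with the following property. Let $H$ be a finite-dimensional complex Hilbert space, $U:H\to H$ unitary and $A:H\to H$ Hermitian such that $1$ is an eigenvalue of $A$ and every other eigenvalue $\mu$ of $A$ satisfies $|\mu|\le\lambda$. Let $A_{\max}$ be the eigenspace of $A$ for the eigenvalue $1$ and $P_{\max}$ the orthogonal projection onto $A_{\max}$, and assume $\|P_{\max}Uv\|\le d\|v\|$ for all $v\in A_{\max}$. Then the spectral radius of $UA$ is at most $f(\lambda,d)$. *)

theory Defs
  imports "Jordan_Normal_Form.Spectral_Radius" "Jordan_Normal_Form.Schur_Decomposition"
begin

text \<open>Finite-dimensional complex Hilbert spaces are modelled as complex n-vectors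
  (complex vec of dimension n) with the standard inner product; operators are n x n
  complex matrices.\<close>

definition vnorm :: "complex vec \<Rightarrow> real" where
  "vnorm v = sqrt (\<Sum>i<dim_vec v. (cmod (v $ i))\<^sup>2)"

definition unitary_mat :: "nat \<Rightarrow> complex mat \<Rightarrow> bool" where
  "unitary_mat n U \<longleftrightarrow> U \<in> carrier_mat n n \<and>
     U * mat_adjoint U = 1\<^sub>m n \<and> mat_adjoint U * U = 1\<^sub>m n"

definition hermitian_mat :: "nat \<Rightarrow> complex mat \<Rightarrow> bool" where
  "hermitian_mat n A \<longleftrightarrow> A \<in> carrier_mat n n \<and> mat_adjoint A = A"

definition eigenspace_mat :: "nat \<Rightarrow> complex mat \<Rightarrow> complex \<Rightarrow> complex vec set" where
  "eigenspace_mat n A k = {v \<in> carrier_vec n. A *\<^sub>v v = k \<cdot>\<^sub>v v}"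

definition orth_proj_onto :: "nat \<Rightarrow> complex mat \<Rightarrow> complex vec set \<Rightarrow> bool" where
  "orth_proj_onto n P S \<longleftrightarrow> P \<in> carrier_mat n n \<and>
     (\<forall>v \<in> carrier_vec n. P *\<^sub>v v \<in> S \<and> (\<forall>w \<in> S. (v - P *\<^sub>v v) \<bullet>c w = 0))"

end

theory Submission
  imports Defs "HOL-Analysis.L2_Norm"
begin

text \<open>Let \<open>\<mu>\<close> be an eigenvalue of \<open>U A\<close> of maximal modulus with eigenvector \<open>x\<close>, and
  split \<open>x = a + b\<close> with \<open>a = P x\<close> in the eigenspace \<open>A\<^sub>m\<^sub>a\<^sub>x\<close> and \<open>b\<close> orthogonal
  to it. Since \<open>A\<close> is Hermitian, \<open>A b\<close> is again orthogonal to \<open>A\<^sub>m\<^sub>a\<^sub>x\<close> and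
  \<open>\<parallel>A b\<parallel> \<le> \<lambda> \<parallel>b\<parallel>\<close>. Unitarity of \<open>U\<close> gives
  \<open>|\<mu>|\<^sup>2 \<parallel>x\<parallel>\<^sup>2 = \<parallel>a\<parallel>\<^sup>2 + \<parallel>A b\<parallel>\<^sup>2 \<le> \<parallel>a\<parallel>\<^sup>2 + \<lambda>\<^sup>2 \<parallel>b\<parallel>\<^sup>2\<close>, and projecting
  \<open>\<mu> x = U a + U (A b)\<close> onto \<open>A\<^sub>m\<^sub>a\<^sub>x\<close> gives \<open>|\<mu>| \<parallel>a\<parallel> \<le> d \<parallel>a\<parallel> + \<parallel>b\<parallel>\<close>. If \<open>\<parallel>b\<parallel>\<close>
  is small compared to \<open>\<parallel>x\<parallel>\<close>, the second inequality forces \<open>|\<mu>| \<le> (1 + d) / 2\<close>;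
  otherwise the first one keeps \<open>|\<mu>|\<close> uniformly below 1.

  The estimate \<open>\<parallel>A b\<parallel> \<le> \<lambda> \<parallel>b\<parallel>\<close> is obtained without the spectral theorem: \<open>A - P\<close>
  is Hermitian, agrees with \<open>A\<close> on the orthogonal complement of \<open>A\<^sub>m\<^sub>a\<^sub>x\<close>, and its
  eigenvalues have modulus at most \<open>\<lambda>\<close>. For Hermitian \<open>M\<close> one has
  \<open>\<parallel>M b\<parallel>^(2^j) \<le> \<parallel>M^(2^j) b\<parallel> \<parallel>b\<parallel>^(2^j - 1)\<close>, so if the powers of \<open>M\<close> are
  bounded, which holds when its spectral radius is below 1, then \<open>M\<close> is a contraction.\<close>

section \<open>Norm and inner product of complex vectors\<close>

lemma vnorm_eq_L2_set: "vnorm v = L2_set (\<lambda>i. cmod (v $ i)) {..<dim_vec v}"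
  unfolding vnorm_def L2_set_def by simp

lemma vnorm_nonneg [simp]: "0 \<le> vnorm v"
  unfolding vnorm_def by (simp add: sum_nonneg)

lemma cmod_index_le_vnorm: "i < dim_vec v \<Longrightarrow> cmod (v $ i) \<le> vnorm v"
  unfolding vnorm_eq_L2_set by (rule member_le_L2_set) auto

lemma vnorm_le_sum_cmod: "vnorm v \<le> (\<Sum>i<dim_vec v. cmod (v $ i))"
  unfolding vnorm_eq_L2_set by (rule L2_set_le_sum) simp

lemma cscalar_prod_eq_sum:
  "dim_vec y = dim_vec x \<Longrightarrow> x \<bullet>c y = (\<Sum>i<dim_vec x. x $ i * cnj (y $ i))"
  unfolding scalar_prod_def by (auto intro!: sum.cong simp: lessThan_atLeast0)

lemma cscalar_prod_self: "v \<bullet>c v = of_real ((vnorm v)\<^sup>2)"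
proof -
  have "v \<bullet>c v = (\<Sum>i<dim_vec v. of_real ((cmod (v $ i))\<^sup>2))"
    by (simp add: cscalar_prod_eq_sum complex_mult_cnj cmod_power2)
  also have "\<dots> = of_real ((vnorm v)\<^sup>2)"
    unfolding vnorm_def by (simp add: sum_nonneg)
  finally show ?thesis .
qed

lemma cscalar_prod_swap:
  "x \<in> carrier_vec n \<Longrightarrow> y \<in> carrier_vec n \<Longrightarrow> y \<bullet>c x = cnj (x \<bullet>c y)"
  by (simp add: cscalar_prod_eq_sum cnj_sum mult.commute)

lemma norm_cscalar_prod_le:
  assumes "dim_vec y = dim_vec x"
  shows "cmod (x \<bullet>c y) \<le> vnorm x * vnorm y"
proof -
  have "cmod (x \<bullet>c y) \<le> (\<Sum>i<dim_vec x. cmod (x $ i) * cmod (y $ i))"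
    unfolding cscalar_prod_eq_sum[OF assms] by (rule sum_norm_le) (simp add: norm_mult)
  also have "\<dots> \<le> vnorm x * vnorm y"
    using L2_set_mult_ineq[of "\<lambda>i. cmod (x $ i)" "\<lambda>i. cmod (y $ i)" "{..<dim_vec x}"] assms
    by (simp add: vnorm_eq_L2_set)
  finally show ?thesis .
qed

lemma vnorm_smult: "vnorm (c \<cdot>\<^sub>v v) = cmod c * vnorm v"
proof -
  have "(\<Sum>i<dim_vec v. (cmod ((c \<cdot>\<^sub>v v) $ i))\<^sup>2) = (cmod c)\<^sup>2 * (\<Sum>i<dim_vec v. (cmod (v $ i))\<^sup>2)"
    by (simp add: sum_distrib_left norm_mult power_mult_distrib)
  then show ?thesis
    unfolding vnorm_def by (simp add: real_sqrt_mult)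
qed

lemma vnorm_eq_0_iff: "v \<in> carrier_vec n \<Longrightarrow> vnorm v = 0 \<longleftrightarrow> v = 0\<^sub>v n"
  using conjugate_square_eq_0_vec[of v n] by (simp add: cscalar_prod_self)

lemma vnorm_add_power2:
  assumes "x \<in> carrier_vec n" "y \<in> carrier_vec n"
  shows "(vnorm (x + y))\<^sup>2 = (vnorm x)\<^sup>2 + (vnorm y)\<^sup>2 + 2 * Re (x \<bullet>c y)"
proof -
  have "of_real ((vnorm (x + y))\<^sup>2) = (x + y) \<bullet>c (x + y)"
    by (simp only: cscalar_prod_self)
  also have "\<dots> = x \<bullet>c x + y \<bullet>c y + (x \<bullet>c y + y \<bullet>c x)"
    using assms by (simp add: conjugate_add_vec[of _ n] scalar_prod_add_distrib[of _ n]
        add_scalar_prod_distrib[of _ n] algebra_simps)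
  also have "\<dots> = of_real ((vnorm x)\<^sup>2 + (vnorm y)\<^sup>2 + 2 * Re (x \<bullet>c y))"
    using cscalar_prod_swap[OF assms] by (simp add: cscalar_prod_self complex_add_cnj)
  finally show ?thesis
    using of_real_eq_iff by blast
qed

lemma vnorm_add_power2_orthogonal:
  "x \<in> carrier_vec n \<Longrightarrow> y \<in> carrier_vec n \<Longrightarrow> x \<bullet>c y = 0 \<Longrightarrow>
    (vnorm (x + y))\<^sup>2 = (vnorm x)\<^sup>2 + (vnorm y)\<^sup>2"
  by (simp add: vnorm_add_power2)

lemma vnorm_triangle:
  assumes "x \<in> carrier_vec n" "y \<in> carrier_vec n"
  shows "vnorm (x + y) \<le> vnorm x + vnorm y"
proof -
  have "Re (x \<bullet>c y) \<le> vnorm x * vnorm y"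
    using norm_cscalar_prod_le[of y x] complex_Re_le_cmod[of "x \<bullet>c y"] assms by auto
  then have "(vnorm (x + y))\<^sup>2 \<le> (vnorm x + vnorm y)\<^sup>2"
    using vnorm_add_power2[OF assms] by (simp add: power2_sum)
  then show ?thesis
    by (rule power2_le_imp_le) simp
qed

lemma vnorm_mult_mat_vec_le_norm_bound:
  assumes B: "B \<in> carrier_mat n n" and "norm_bound B c" and v: "v \<in> carrier_vec n"
  shows "vnorm (B *\<^sub>v v) \<le> real n * real n * c * vnorm v"
proof -
  have entry: "cmod ((B *\<^sub>v v) $ i) \<le> real n * c * vnorm v" if "i < n" for i
  proof -
    have "cmod ((B *\<^sub>v v) $ i) \<le> (\<Sum>j<n. cmod (B $$ (i, j)) * cmod (v $ j))"
      using that B v by (auto simp: scalar_prod_def lessThan_atLeast0 norm_mult intro!: sum_norm_le)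
    also have "\<dots> \<le> (\<Sum>j<n. c * vnorm v)"
      using \<open>norm_bound B c\<close> that B v cmod_index_le_vnorm[of _ v] unfolding norm_bound_def
      by (intro sum_mono mult_mono) (auto intro: order_trans[OF norm_ge_zero])
    finally show ?thesis by simp
  qed
  have "vnorm (B *\<^sub>v v) \<le> (\<Sum>i<n. cmod ((B *\<^sub>v v) $ i))"
    using vnorm_le_sum_cmod[of "B *\<^sub>v v"] B by simp
  also have "\<dots> \<le> (\<Sum>i<n. real n * c * vnorm v)"
    by (rule sum_mono) (use entry in auto)
  finally show ?thesis by (simp add: mult.assoc)
qed

section \<open>Adjoints, Hermitian and unitary matrices\<close>

lemma dim_mat_adjoint [simp]:
  "dim_row (mat_adjoint A) = dim_col A" "dim_col (mat_adjoint A) = dim_row A"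
  by (auto simp: mat_adjoint_def mat_of_rows_def)

lemma mat_adjoint_carrier: "A \<in> carrier_mat n m \<Longrightarrow> mat_adjoint A \<in> carrier_mat m n"
  by (intro carrier_matI) (auto dest: carrier_matD)

lemma index_mat_adjoint [simp]:
  "i < dim_col A \<Longrightarrow> j < dim_row A \<Longrightarrow> mat_adjoint A $$ (i, j) = conjugate (A $$ (j, i))"
  by (auto simp: mat_adjoint_def mat_of_rows_def)

lemma cscalar_prod_mat_adjoint:
  fixes A :: "complex mat"
  assumes A: "A \<in> carrier_mat n n" and x: "x \<in> carrier_vec n" and y: "y \<in> carrier_vec n"
  shows "(A *\<^sub>v x) \<bullet>c y = x \<bullet>c (mat_adjoint A *\<^sub>v y)"
proof -
  have "(A *\<^sub>v x) \<bullet>c y = (\<Sum>i<n. \<Sum>j<n. A $$ (i, j) * x $ j * cnj (y $ i))"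
    using A x y by (simp add: cscalar_prod_eq_sum scalar_prod_def lessThan_atLeast0 sum_distrib_right)
  also have "\<dots> = (\<Sum>j<n. \<Sum>i<n. A $$ (i, j) * x $ j * cnj (y $ i))"
    by (rule sum.swap)
  also have "\<dots> = x \<bullet>c (mat_adjoint A *\<^sub>v y)"
    using A x y by (simp add: cscalar_prod_eq_sum scalar_prod_def lessThan_atLeast0
        cnj_sum sum_distrib_left algebra_simps)
  finally show ?thesis .
qed

lemma hermitian_mat_cscalar_prod:
  "hermitian_mat n A \<Longrightarrow> x \<in> carrier_vec n \<Longrightarrow> y \<in> carrier_vec n \<Longrightarrow>
    (A *\<^sub>v x) \<bullet>c y = x \<bullet>c (A *\<^sub>v y)"
  unfolding hermitian_mat_def by (metis cscalar_prod_mat_adjoint)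

lemma hermitian_matI:
  fixes A :: "complex mat"
  assumes A: "A \<in> carrier_mat n n"
    and sym: "\<And>x y. x \<in> carrier_vec n \<Longrightarrow> y \<in> carrier_vec n \<Longrightarrow> (A *\<^sub>v x) \<bullet>c y = x \<bullet>c (A *\<^sub>v y)"
  shows "hermitian_mat n A"
  unfolding hermitian_mat_def
proof (intro conjI A eq_matI)
  fix i j assume i: "i < dim_row A" and j: "j < dim_col A"
  have unit: "conjugate (unit_vec n k) = (unit_vec n k :: complex vec)" for k
    by (intro eq_vecI) (auto simp: unit_vec_def)
  have "A $$ (i, j) = (A *\<^sub>v unit_vec n j) \<bullet>c unit_vec n i"
    using A i j by (simp add: unit scalar_prod_right_unit)
  also have "\<dots> = unit_vec n j \<bullet>c (A *\<^sub>v unit_vec n i)"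
    using i j A by (intro sym) auto
  also have "\<dots> = cnj (A $$ (j, i))"
    using A i j by (simp add: unit scalar_prod_left_unit)
  finally show "mat_adjoint A $$ (i, j) = A $$ (i, j)"
    using A i j by simp
qed (use A in auto)

lemma mat_adjoint_minus:
  assumes "A \<in> carrier_mat n m" "B \<in> carrier_mat n m"
  shows "mat_adjoint (A - B) = mat_adjoint A - mat_adjoint B"
  using carrier_matD[OF assms(1)] carrier_matD[OF assms(2)]
  by (intro eq_matI) (auto simp: diff_conv_add_uminus conjugate_dist_add conjugate_neg
      simp del: add_uminus_conv_diff)

lemma mat_adjoint_smult: "mat_adjoint (c \<cdot>\<^sub>m A) = conjugate c \<cdot>\<^sub>m mat_adjoint A"
  by (intro eq_matI) (auto simp: conjugate_dist_mul)

lemma hermitian_mat_minus: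
  "hermitian_mat n A \<Longrightarrow> hermitian_mat n B \<Longrightarrow> hermitian_mat n (A - B)"
  unfolding hermitian_mat_def by (auto simp: mat_adjoint_minus[of _ n n])

lemma hermitian_mat_smult_real:
  "hermitian_mat n A \<Longrightarrow> hermitian_mat n (complex_of_real c \<cdot>\<^sub>m A)"
  by (simp add: hermitian_mat_def mat_adjoint_smult)

lemma unitary_mat_vnorm:
  assumes "unitary_mat n U" "x \<in> carrier_vec n"
  shows "vnorm (U *\<^sub>v x) = vnorm x"
proof -
  have U: "U \<in> carrier_mat n n" "mat_adjoint U * U = 1\<^sub>m n"
    using assms unfolding unitary_mat_def by auto
  have "of_real ((vnorm (U *\<^sub>v x))\<^sup>2) = x \<bullet>c (mat_adjoint U *\<^sub>v (U *\<^sub>v x))"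
    using cscalar_prod_mat_adjoint[of U n x "U *\<^sub>v x"] U assms(2) by (simp add: cscalar_prod_self)
  also have "mat_adjoint U *\<^sub>v (U *\<^sub>v x) = (mat_adjoint U * U) *\<^sub>v x"
    using U(1) assms(2) mat_adjoint_carrier[OF U(1)] by simp
  also have "\<dots> = x"
    using U assms(2) by simp
  also have "x \<bullet>c x = of_real ((vnorm x)\<^sup>2)"
    by (rule cscalar_prod_self)
  finally have "(vnorm (U *\<^sub>v x))\<^sup>2 = (vnorm x)\<^sup>2"
    using of_real_eq_iff by blast
  then show ?thesis
    by (simp add: power2_eq_iff_nonneg)
qed

lemma pow_mat_add: "A \<in> carrier_mat n n \<Longrightarrow> A ^\<^sub>m (k + l) = A ^\<^sub>m k * A ^\<^sub>m l"
  by (induction l) (auto simp: assoc_mult_mat[of _ n n _ n _ n])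

lemma pow_mat_Suc_mult_mat_vec:
  "A \<in> carrier_mat n n \<Longrightarrow> x \<in> carrier_vec n \<Longrightarrow> A ^\<^sub>m Suc k *\<^sub>v x = A *\<^sub>v (A ^\<^sub>m k *\<^sub>v x)"
  using pow_mat_add[of A n 1 k] by (simp add: assoc_mult_mat_vec[of _ n n _ n])

lemma hermitian_mat_pow_cscalar_prod:
  assumes M: "hermitian_mat n M" and "x \<in> carrier_vec n" "y \<in> carrier_vec n"
  shows "(M ^\<^sub>m k *\<^sub>v x) \<bullet>c y = x \<bullet>c (M ^\<^sub>m k *\<^sub>v y)"
  using assms(2)
proof (induction k arbitrary: x)
  case 0
  then show ?case using M assms(3) unfolding hermitian_mat_def by auto
next
  case (Suc k)
  have Mc: "M \<in> carrier_mat n n"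
    using M unfolding hermitian_mat_def by simp
  have "(M ^\<^sub>m Suc k *\<^sub>v x) \<bullet>c y = (M ^\<^sub>m k *\<^sub>v (M *\<^sub>v x)) \<bullet>c y"
    using Mc Suc.prems by (simp add: assoc_mult_mat_vec[of _ n n _ n])
  also have "\<dots> = (M *\<^sub>v x) \<bullet>c (M ^\<^sub>m k *\<^sub>v y)"
    using Suc Mc by simp
  also have "\<dots> = x \<bullet>c (M *\<^sub>v (M ^\<^sub>m k *\<^sub>v y))"
    by (rule hermitian_mat_cscalar_prod[OF M Suc.prems])
      (use Mc assms(3) in \<open>metis pow_carrier_mat mult_mat_vec_carrier\<close>)
  also have "M *\<^sub>v (M ^\<^sub>m k *\<^sub>v y) = M ^\<^sub>m Suc k *\<^sub>v y"
    by (rule pow_mat_Suc_mult_mat_vec[OF Mc assms(3), symmetric])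
  finally show ?case .
qed

section \<open>Hermitian matrices are bounded by their eigenvalues\<close>

lemma hermitian_mat_vnorm_pow_power2_le:
  assumes M: "hermitian_mat n M" and b: "b \<in> carrier_vec n"
  shows "(vnorm (M ^\<^sub>m k *\<^sub>v b))\<^sup>2 \<le> vnorm (M ^\<^sub>m (k + k) *\<^sub>v b) * vnorm b"
proof -
  have Mc: "M \<in> carrier_mat n n"
    using M unfolding hermitian_mat_def by simp
  have "of_real ((vnorm (M ^\<^sub>m k *\<^sub>v b))\<^sup>2) = b \<bullet>c (M ^\<^sub>m k *\<^sub>v (M ^\<^sub>m k *\<^sub>v b))"
    unfolding cscalar_prod_self[symmetric]
    by (rule hermitian_mat_pow_cscalar_prod[OF M b]) (use Mc b in \<open>metis pow_carrier_mat mult_mat_vec_carrier\<close>)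
  also have "M ^\<^sub>m k *\<^sub>v (M ^\<^sub>m k *\<^sub>v b) = M ^\<^sub>m (k + k) *\<^sub>v b"
    using Mc b by (simp add: pow_mat_add[OF Mc] assoc_mult_mat_vec[of _ n n _ n])
  finally have "(vnorm (M ^\<^sub>m k *\<^sub>v b))\<^sup>2 = cmod (b \<bullet>c (M ^\<^sub>m (k + k) *\<^sub>v b))"
    by (metis norm_of_real abs_of_nonneg zero_le_power2)
  also have "\<dots> \<le> vnorm b * vnorm (M ^\<^sub>m (k + k) *\<^sub>v b)"
    by (rule norm_cscalar_prod_le) (use Mc b in simp)
  finally show ?thesis
    by (simp add: mult.commute)
qed

lemma hermitian_mat_vnorm_power_two_pow_le:
  assumes M: "hermitian_mat n M" and b: "b \<in> carrier_vec n"
  shows "vnorm (M *\<^sub>v b) ^ 2 ^ j \<le> vnorm (M ^\<^sub>m 2 ^ j *\<^sub>v b) * vnorm b ^ (2 ^ j - 1)"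
proof (induction j)
  case 0
  have "M \<in> carrier_mat n n"
    using M unfolding hermitian_mat_def by simp
  then show ?case by simp
next
  case (Suc j)
  define N :: nat where "N = 2 ^ j"
  have "vnorm (M *\<^sub>v b) ^ 2 ^ Suc j = (vnorm (M *\<^sub>v b) ^ N)\<^sup>2"
    unfolding N_def by (simp add: power_mult[symmetric] mult.commute)
  also have "\<dots> \<le> (vnorm (M ^\<^sub>m N *\<^sub>v b) * vnorm b ^ (N - 1))\<^sup>2"
    using Suc.IH unfolding N_def by (intro power_mono) auto
  also have "\<dots> = (vnorm (M ^\<^sub>m N *\<^sub>v b))\<^sup>2 * vnorm b ^ (2 * (N - 1))"
    by (simp add: power_mult_distrib power_mult[symmetric] mult.commute)
  also have "\<dots> \<le> vnorm (M ^\<^sub>m (N + N) *\<^sub>v b) * vnorm b * vnorm b ^ (2 * (N - 1))"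
    using hermitian_mat_vnorm_pow_power2_le[OF M b, of N] by (intro mult_right_mono) auto
  also have "\<dots> = vnorm (M ^\<^sub>m 2 ^ Suc j *\<^sub>v b) * vnorm b ^ (2 ^ Suc j - 1)"
  proof -
    have "2 ^ Suc j = 2 * N" "1 \<le> N"
      unfolding N_def by simp_all
    then have "2 ^ Suc j - 1 = Suc (2 * (N - 1))"
      by arith
    then show ?thesis
      unfolding N_def by (simp add: mult_2[symmetric])
  qed
  finally show ?case .
qed

lemma le_of_power_two_pow_le_const_mult:
  fixes x y K :: real
  assumes "0 \<le> y" and bound: "\<And>j. x ^ 2 ^ j \<le> K * y ^ 2 ^ j"
  shows "x \<le> y"
proof (rule ccontr)
  assume "\<not> x \<le> y"
  then have "y < x" by simp
  show False
  proof (cases "y = 0")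
    case True
    with bound[of 0] \<open>y < x\<close> show False by simp
  next
    case False
    then have y: "0 < y" using assms(1) by simp
    have r: "1 < x / y"
      using \<open>y < x\<close> y by simp
    obtain m where m: "K < (x / y) ^ m"
      using real_arch_pow[OF r] by blast
    have "(x / y) ^ m \<le> (x / y) ^ 2 ^ m"
      using r less_exp[of m] by (intro power_increasing) auto
    also have "\<dots> \<le> K"
      using bound[of m] y by (simp add: power_divide divide_le_eq)
    finally show False
      using m by simp
  qed
qed

lemma hermitian_mat_vnorm_le_of_spectral_radius_less_1:
  assumes M: "hermitian_mat n M" and sr: "spectral_radius M < 1" and b: "b \<in> carrier_vec n"
  shows "vnorm (M *\<^sub>v b) \<le> vnorm b"
proof -
  have Mc: "M \<in> carrier_mat n n"
    using M unfolding hermitian_mat_def by simp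
  obtain c where c: "\<And>k. norm_bound (M ^\<^sub>m k) c"
    using spectral_radius_jnf_norm_bound_less_1_upper_triangular[OF Mc sr] by blast
  define K where "K = real n * real n * c"
  show ?thesis
  proof (rule le_of_power_two_pow_le_const_mult[of _ _ K])
    fix j :: nat
    have "vnorm (M *\<^sub>v b) ^ 2 ^ j \<le> vnorm (M ^\<^sub>m 2 ^ j *\<^sub>v b) * vnorm b ^ (2 ^ j - 1)"
      by (rule hermitian_mat_vnorm_power_two_pow_le[OF M b])
    also have "\<dots> \<le> K * vnorm b * vnorm b ^ (2 ^ j - 1)"
      using vnorm_mult_mat_vec_le_norm_bound[OF pow_carrier_mat[OF Mc] c b] unfolding K_def
      by (intro mult_right_mono) auto
    also have "\<dots> = K * vnorm b ^ 2 ^ j"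
      by (simp add: mult.assoc power_eq_if[of _ "2 ^ j"])
    finally show "vnorm (M *\<^sub>v b) ^ 2 ^ j \<le> K * vnorm b ^ 2 ^ j" .
  qed simp
qed

lemma smult_mat_mult_mat_vec:
  "B \<in> carrier_mat n m \<Longrightarrow> v \<in> carrier_vec m \<Longrightarrow> (c \<cdot>\<^sub>m B) *\<^sub>v v = c \<cdot>\<^sub>v (B *\<^sub>v v)"
  by (intro eq_vecI) (auto simp: scalar_prod_def sum_distrib_left mult.assoc)

lemma eigenvalue_smult_mat:
  fixes M :: "complex mat"
  assumes M: "M \<in> carrier_mat n n" and "c \<noteq> 0" and "eigenvalue (c \<cdot>\<^sub>m M) \<mu>"
  shows "eigenvalue M (\<mu> / c)"
proof -
  obtain v where v: "v \<in> carrier_vec n" "v \<noteq> 0\<^sub>v n" "(c \<cdot>\<^sub>m M) *\<^sub>v v = \<mu> \<cdot>\<^sub>v v"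
    using assms(3) M unfolding eigenvalue_def eigenvector_def by auto
  have "M *\<^sub>v v = (1 / c) \<cdot>\<^sub>v ((c \<cdot>\<^sub>m M) *\<^sub>v v)"
    using M v(1) \<open>c \<noteq> 0\<close> by (simp add: smult_mat_mult_mat_vec smult_smult_assoc)
  also have "\<dots> = (\<mu> / c) \<cdot>\<^sub>v v"
    using v(3) by (simp add: smult_smult_assoc)
  finally show ?thesis
    using M v unfolding eigenvalue_def eigenvector_def by auto
qed

lemma hermitian_mat_vnorm_le_of_eigenvalues_less:
  assumes M: "hermitian_mat n M" and ev: "\<And>k. eigenvalue M k \<Longrightarrow> cmod k < s" and "0 < s"
    and b: "b \<in> carrier_vec n"
  shows "vnorm (M *\<^sub>v b) \<le> s * vnorm b"
proof (cases "n = 0")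
  case True
  then have "dim_vec (M *\<^sub>v b) = 0"
    using M carrier_matD(1)[of M n n] unfolding hermitian_mat_def by simp
  then have "vnorm (M *\<^sub>v b) = 0"
    by (simp add: vnorm_def)
  then show ?thesis
    using \<open>0 < s\<close> by simp
next
  case False
  have Mc: "M \<in> carrier_mat n n"
    using M unfolding hermitian_mat_def by simp
  define M' where "M' = complex_of_real (1 / s) \<cdot>\<^sub>m M"
  have M'c: "M' \<in> carrier_mat n n"
    unfolding M'_def using Mc by simp
  obtain \<nu> where "eigenvalue M' \<nu>" and sr: "spectral_radius M' = cmod \<nu>"
    using spectral_radius_mem_max(1)[OF M'c] False unfolding spectrum_def by auto
  have "eigenvalue M (\<nu> / complex_of_real (1 / s))"
    by (rule eigenvalue_smult_mat[OF Mc]) (use \<open>0 < s\<close> \<open>eigenvalue M' \<nu>\<close> M'_def in auto)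
  then have "s * cmod \<nu> < s * 1"
    using ev \<open>0 < s\<close> by (fastforce simp: norm_mult mult.commute)
  then have "spectral_radius M' < 1"
    using sr \<open>0 < s\<close> by simp
  moreover have "hermitian_mat n M'"
    unfolding M'_def by (rule hermitian_mat_smult_real[OF M])
  ultimately have "vnorm (M' *\<^sub>v b) \<le> vnorm b"
    using b hermitian_mat_vnorm_le_of_spectral_radius_less_1 by blast
  then show ?thesis
    using Mc b \<open>0 < s\<close> unfolding M'_def
    by (simp add: smult_mat_mult_mat_vec vnorm_smult norm_divide field_simps)
qed

lemma hermitian_mat_vnorm_le:
  assumes M: "hermitian_mat n M" and ev: "\<And>k. eigenvalue M k \<Longrightarrow> cmod k \<le> r"
    and b: "b \<in> carrier_vec n"
  shows "vnorm (M *\<^sub>v b) \<le> r * vnorm b"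
proof (cases "b = 0\<^sub>v n")
  case True
  have "M *\<^sub>v b = 0\<^sub>v n"
    using M True unfolding hermitian_mat_def by auto
  then show ?thesis
    using True vnorm_eq_0_iff[of "0\<^sub>v n" n] by simp
next
  case False
  have "n > 0"
    using False b by (cases n) auto
  then obtain k where "eigenvalue M k"
    using spectrum_non_empty[of M n] M unfolding hermitian_mat_def spectrum_def by auto
  then have "0 \<le> r"
    using ev[of k] norm_ge_zero[of k] by linarith
  have pos: "0 < vnorm b"
    using False vnorm_eq_0_iff[OF b] vnorm_nonneg[of b] by linarith
  have "vnorm (M *\<^sub>v b) / vnorm b \<le> r"
  proof (rule dense_ge)
    fix s assume "r < s"
    then have "vnorm (M *\<^sub>v b) \<le> s * vnorm b"
      using ev \<open>0 \<le> r\<close> by (intro hermitian_mat_vnorm_le_of_eigenvalues_less[OF M _ _ b]) force+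
    then show "vnorm (M *\<^sub>v b) / vnorm b \<le> s"
      using pos by (simp add: divide_le_eq)
  qed
  then show ?thesis
    using pos by (simp add: divide_le_eq)
qed

section \<open>Orthogonal projections and eigenspaces\<close>

lemma orth_proj_onto_cscalar_prod:
  assumes P: "orth_proj_onto n P S" and S: "S \<subseteq> carrier_vec n"
    and v: "v \<in> carrier_vec n" and w: "w \<in> S"
  shows "v \<bullet>c w = (P *\<^sub>v v) \<bullet>c w"
proof -
  have Pv: "P *\<^sub>v v \<in> carrier_vec n" and orth: "(v - P *\<^sub>v v) \<bullet>c w = 0"
    using P S v w unfolding orth_proj_onto_def by auto
  have "(v - P *\<^sub>v v) \<bullet>c w = v \<bullet>c w - (P *\<^sub>v v) \<bullet>c w"
    using v Pv w S by (intro minus_scalar_prod_distrib[of _ n]) auto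
  then show ?thesis
    using orth by simp
qed

lemma orth_proj_onto_hermitian:
  assumes P: "orth_proj_onto n P S" and S: "S \<subseteq> carrier_vec n"
  shows "hermitian_mat n P"
proof (rule hermitian_matI)
  show Pc: "P \<in> carrier_mat n n"
    using P unfolding orth_proj_onto_def by simp
  fix x y :: "complex vec" assume x: "x \<in> carrier_vec n" and y: "y \<in> carrier_vec n"
  have PS: "P *\<^sub>v x \<in> S" "P *\<^sub>v y \<in> S"
    using P x y unfolding orth_proj_onto_def by auto
  have "(P *\<^sub>v x) \<bullet>c y = cnj (y \<bullet>c (P *\<^sub>v x))"
    using Pc x y by (intro cscalar_prod_swap[of _ n]) auto
  also have "\<dots> = cnj ((P *\<^sub>v y) \<bullet>c (P *\<^sub>v x))"
    using orth_proj_onto_cscalar_prod[OF P S y PS(1)] by simp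
  also have "\<dots> = (P *\<^sub>v x) \<bullet>c (P *\<^sub>v y)"
    using Pc x y by (intro cscalar_prod_swap[symmetric, of _ n]) auto
  also have "\<dots> = x \<bullet>c (P *\<^sub>v y)"
    using orth_proj_onto_cscalar_prod[OF P S x PS(2)] by simp
  finally show "(P *\<^sub>v x) \<bullet>c y = x \<bullet>c (P *\<^sub>v y)" .
qed

lemma orth_proj_onto_eq_0:
  assumes P: "orth_proj_onto n P S" and S: "S \<subseteq> carrier_vec n"
    and b: "b \<in> carrier_vec n" and orth: "\<forall>w\<in>S. b \<bullet>c w = 0"
  shows "P *\<^sub>v b = 0\<^sub>v n"
proof -
  have Pb: "P *\<^sub>v b \<in> S"
    using P b unfolding orth_proj_onto_def by auto
  have "(P *\<^sub>v b) \<bullet>c (P *\<^sub>v b) = b \<bullet>c (P *\<^sub>v b)"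
    using orth_proj_onto_cscalar_prod[OF P S b Pb] by simp
  also have "\<dots> = 0"
    using orth Pb by simp
  finally show ?thesis
    using conjugate_square_eq_0_vec[of "P *\<^sub>v b" n] Pb S by blast
qed

lemma vnorm_orth_proj_onto_le:
  assumes P: "orth_proj_onto n P S" and w: "w \<in> carrier_vec n"
  shows "vnorm (P *\<^sub>v w) \<le> vnorm w"
proof -
  have Pc: "P \<in> carrier_mat n n" and orth: "(w - P *\<^sub>v w) \<bullet>c (P *\<^sub>v w) = 0"
    using P w unfolding orth_proj_onto_def by auto
  have Pw: "P *\<^sub>v w \<in> carrier_vec n" and rest: "w - P *\<^sub>v w \<in> carrier_vec n"
    using Pc w by auto
  have decomp: "P *\<^sub>v w + (w - P *\<^sub>v w) = w"
    using Pc w by (intro eq_vecI) auto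
  have "(P *\<^sub>v w) \<bullet>c (w - P *\<^sub>v w) = 0"
    using cscalar_prod_swap[OF rest Pw] orth by simp
  then have "(vnorm w)\<^sup>2 = (vnorm (P *\<^sub>v w))\<^sup>2 + (vnorm (w - P *\<^sub>v w))\<^sup>2"
    using vnorm_add_power2_orthogonal[OF Pw rest] unfolding decomp by simp
  then have "(vnorm (P *\<^sub>v w))\<^sup>2 \<le> (vnorm w)\<^sup>2"
    by simp
  then show ?thesis
    by (rule power2_le_imp_le) simp
qed

lemma eigenspace_mat_subset_carrier: "eigenspace_mat n A k \<subseteq> carrier_vec n"
  unfolding eigenspace_mat_def by auto

lemma hermitian_mat_orthogonal_eigenspace:
  assumes A: "hermitian_mat n A" and b: "b \<in> carrier_vec n"
    and orth: "\<forall>w\<in>eigenspace_mat n A k. b \<bullet>c w = 0"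
  shows "\<forall>w\<in>eigenspace_mat n A k. (A *\<^sub>v b) \<bullet>c w = 0"
proof
  fix w assume w: "w \<in> eigenspace_mat n A k"
  then have wc: "w \<in> carrier_vec n" and Aw: "A *\<^sub>v w = k \<cdot>\<^sub>v w"
    unfolding eigenspace_mat_def by auto
  have "(A *\<^sub>v b) \<bullet>c w = b \<bullet>c (k \<cdot>\<^sub>v w)"
    using hermitian_mat_cscalar_prod[OF A b wc] Aw by simp
  also have "\<dots> = cnj k * (b \<bullet>c w)"
    using b wc by (simp add: conjugate_smult_vec scalar_prod_smult_distrib[of _ n])
  also have "\<dots> = 0"
    using orth w by simp
  finally show "(A *\<^sub>v b) \<bullet>c w = 0" .
qed

lemma orth_proj_eigenspace_eigenvector_minus:
  assumes A: "hermitian_mat n A" and P: "orth_proj_onto n P (eigenspace_mat n A 1)"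
    and v: "v \<in> carrier_vec n" and Pv: "(A - P) *\<^sub>v v = k \<cdot>\<^sub>v v" and "k \<noteq> 0"
  shows "P *\<^sub>v v = 0\<^sub>v n"
proof -
  define S where "S = eigenspace_mat n A 1"
  have Ac: "A \<in> carrier_mat n n" and Pc: "P \<in> carrier_mat n n"
    using A P unfolding hermitian_mat_def orth_proj_onto_def by auto
  have "P *\<^sub>v v \<in> S"
    using P v unfolding orth_proj_onto_def S_def by auto
  then have APv: "A *\<^sub>v (P *\<^sub>v v) = P *\<^sub>v v"
    unfolding S_def eigenspace_mat_def by simp
  define t where "t = v - P *\<^sub>v v"
  have t: "t \<in> carrier_vec n" "\<forall>w\<in>S. t \<bullet>c w = 0"
    using P v Pc unfolding orth_proj_onto_def t_def S_def by auto
  have "A *\<^sub>v t = A *\<^sub>v v - P *\<^sub>v v"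
    unfolding t_def using Ac Pc v APv by (simp add: mult_minus_distrib_mat_vec)
  also have "\<dots> = k \<cdot>\<^sub>v v"
    using Pv Ac Pc v by (simp add: minus_mult_distrib_mat_vec)
  finally have "A *\<^sub>v t = k \<cdot>\<^sub>v v" .
  moreover have "P *\<^sub>v (A *\<^sub>v t) = 0\<^sub>v n"
    using hermitian_mat_orthogonal_eigenspace[OF A t(1)] t Ac
    by (intro orth_proj_onto_eq_0[OF P[folded S_def]]) (auto simp: S_def eigenspace_mat_subset_carrier)
  ultimately have "k \<cdot>\<^sub>v (P *\<^sub>v v) = 0\<^sub>v n"
    using Pc v by (simp add: mult_mat_vec)
  then show ?thesis
    using \<open>k \<noteq> 0\<close> vnorm_smult[of k "P *\<^sub>v v"] vnorm_eq_0_iff[of "P *\<^sub>v v" n]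
      vnorm_eq_0_iff[of "0\<^sub>v n" n] Pc v
    by auto
qed

lemma eigenvalue_minus_orth_proj_eigenspace:
  assumes A: "hermitian_mat n A" and P: "orth_proj_onto n P (eigenspace_mat n A 1)"
    and ev: "eigenvalue (A - P) k" and "k \<noteq> 0"
  shows "eigenvalue A k" "k \<noteq> 1"
proof -
  have Ac: "A \<in> carrier_mat n n" and Pc: "P \<in> carrier_mat n n"
    using A P unfolding hermitian_mat_def orth_proj_onto_def by auto
  obtain v where v: "v \<in> carrier_vec n" "v \<noteq> 0\<^sub>v n" "(A - P) *\<^sub>v v = k \<cdot>\<^sub>v v"
    using ev Pc unfolding eigenvalue_def eigenvector_def by auto
  have Pv: "P *\<^sub>v v = 0\<^sub>v n"
    by (rule orth_proj_eigenspace_eigenvector_minus[OF A P v(1,3) \<open>k \<noteq> 0\<close>])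
  then have Av: "A *\<^sub>v v = k \<cdot>\<^sub>v v"
    using v Ac Pc by (simp add: minus_mult_distrib_mat_vec)
  then show "eigenvalue A k"
    using v Ac unfolding eigenvalue_def eigenvector_def by auto
  show "k \<noteq> 1"
  proof
    assume "k = 1"
    then have "v \<in> eigenspace_mat n A 1"
      unfolding eigenspace_mat_def using v(1) Av by simp
    moreover have "\<forall>w\<in>eigenspace_mat n A 1. v \<bullet>c w = 0"
      using P v(1) Pv unfolding orth_proj_onto_def by force
    ultimately have "v \<bullet>c v = 0"
      by blast
    then show False
      using v(1,2) by simp
  qed
qed

lemma vnorm_hermitian_mat_orthogonal_eigenspace_le:
  assumes A: "hermitian_mat n A" and ev: "\<And>\<mu>. eigenvalue A \<mu> \<Longrightarrow> \<mu> \<noteq> 1 \<Longrightarrow> cmod \<mu> \<le> lam"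
    and "0 \<le> lam" and P: "orth_proj_onto n P (eigenspace_mat n A 1)"
    and b: "b \<in> carrier_vec n" and orth: "\<forall>w\<in>eigenspace_mat n A 1. b \<bullet>c w = 0"
  shows "vnorm (A *\<^sub>v b) \<le> lam * vnorm b"
proof -
  have Ac: "A \<in> carrier_mat n n" and Pc: "P \<in> carrier_mat n n"
    using A P unfolding hermitian_mat_def orth_proj_onto_def by auto
  have "hermitian_mat n (A - P)"
    using A orth_proj_onto_hermitian[OF P eigenspace_mat_subset_carrier] by (rule hermitian_mat_minus)
  moreover have "cmod k \<le> lam" if "eigenvalue (A - P) k" for k
    using eigenvalue_minus_orth_proj_eigenspace[OF A P that] ev \<open>0 \<le> lam\<close> by (cases "k = 0") auto
  ultimately have "vnorm ((A - P) *\<^sub>v b) \<le> lam * vnorm b"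
    using b by (rule hermitian_mat_vnorm_le)
  moreover have "P *\<^sub>v b = 0\<^sub>v n"
    by (rule orth_proj_onto_eq_0[OF P eigenspace_mat_subset_carrier b orth])
  ultimately show ?thesis
    using Ac Pc b by (simp add: minus_mult_distrib_mat_vec)
qed

section \<open>The spectral radius of a unitary times a Hermitian matrix\<close>

definition spectral_radius_bound :: "real \<Rightarrow> real \<Rightarrow> real" where
  "spectral_radius_bound lam d = max ((1 + d) / 2) (sqrt (1 - (1 - lam\<^sup>2) * ((1 - d) / 4)\<^sup>2))"

lemma spectral_radius_bound_less_1:
  assumes "0 \<le> lam" "lam < 1" "0 \<le> d" "d < 1"
  shows "spectral_radius_bound lam d < 1"
proof -
  have "lam\<^sup>2 < 1"
    using assms by (simp add: power_less_one_iff abs_less_iff)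
  then have "0 < (1 - lam\<^sup>2) * ((1 - d) / 4)\<^sup>2"
    using assms by simp
  then show ?thesis
    unfolding spectral_radius_bound_def using assms by simp
qed

text \<open>The lengths \<open>x\<close>, \<open>a\<close>, \<open>b\<close> are those of an eigenvector of \<open>U A\<close> and of its
  components in the eigenspace and its orthogonal complement; \<open>m\<close> is the modulus of the
  eigenvalue.\<close>
lemma le_spectral_radius_bound:
  fixes x a b m lam d :: real
  assumes x: "0 < x" and a: "0 \<le> a" and b: "0 \<le> b" and split: "x\<^sup>2 = a\<^sup>2 + b\<^sup>2"
    and m: "0 \<le> m" and total: "m\<^sup>2 * x\<^sup>2 \<le> a\<^sup>2 + lam\<^sup>2 * b\<^sup>2" and first: "m * a \<le> d * a + b"
    and lam: "0 \<le> lam" "lam \<le> 1" and d: "0 \<le> d" "d < 1"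
  shows "m \<le> spectral_radius_bound lam d"
proof -
  define e where "e = (1 - d) / 4"
  have lam2: "lam\<^sup>2 \<le> 1"
    using lam by (simp add: power_le_one)
  have ax: "a \<le> x"
    using power2_le_imp_le[of a x] split x by simp
  have xab: "x \<le> a + b"
    using power2_le_imp_le[of x "a + b"] split a b by (simp add: power2_sum)
  show ?thesis
  proof (cases "b \<le> e * x")
    case True
    have "m\<^sup>2 * x\<^sup>2 \<le> 1 * x\<^sup>2"
      using total split mult_right_mono[OF lam2, of "b\<^sup>2"] by simp
    then have "m \<le> 1"
      using x m by (simp add: power_le_one_iff)
    have "m * x = m * a + m * (x - a)"
      by (simp add: algebra_simps)
    also have "\<dots> \<le> (d * a + b) + (x - a)"
      using first mult_left_le_one_le[of "x - a" m] m \<open>m \<le> 1\<close> ax by linarith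
    also have "\<dots> \<le> d * x + 2 * (e * x)"
      using mult_left_mono[OF ax d(1)] True xab by linarith
    also have "\<dots> = (1 + d) / 2 * x"
      unfolding e_def by (simp add: field_simps)
    finally have "m \<le> (1 + d) / 2"
      using x by simp
    then show ?thesis
      unfolding spectral_radius_bound_def by (rule order_trans[OF _ max.cobounded1])
  next
    case False
    have "(e * x)\<^sup>2 \<le> b\<^sup>2"
      using False x d unfolding e_def by (intro power_mono) auto
    then have "(1 - lam\<^sup>2) * (e * x)\<^sup>2 \<le> (1 - lam\<^sup>2) * b\<^sup>2"
      using lam2 by (intro mult_left_mono) auto
    then have "m\<^sup>2 * x\<^sup>2 \<le> (1 - (1 - lam\<^sup>2) * e\<^sup>2) * x\<^sup>2"
      using total split by (simp add: algebra_simps power_mult_distrib)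
    then have "m\<^sup>2 \<le> 1 - (1 - lam\<^sup>2) * e\<^sup>2"
      using x by simp
    then have "m \<le> sqrt (1 - (1 - lam\<^sup>2) * e\<^sup>2)"
      by (rule real_le_rsqrt)
    then show ?thesis
      unfolding spectral_radius_bound_def e_def by (rule order_trans[OF _ max.cobounded2])
  qed
qed

lemma hermitian_mat_orth_proj_eigenspace_split:
  assumes A: "hermitian_mat n A" and ev: "\<And>\<mu>. eigenvalue A \<mu> \<Longrightarrow> \<mu> \<noteq> 1 \<Longrightarrow> cmod \<mu> \<le> lam"
    and "0 \<le> lam" and P: "orth_proj_onto n P (eigenspace_mat n A 1)" and x: "x \<in> carrier_vec n"
  defines "a \<equiv> P *\<^sub>v x" and "b \<equiv> x - P *\<^sub>v x"
  shows "A *\<^sub>v x = a + A *\<^sub>v b"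
    and "vnorm (A *\<^sub>v b) \<le> lam * vnorm b"
    and "(vnorm x)\<^sup>2 = (vnorm a)\<^sup>2 + (vnorm b)\<^sup>2"
    and "(vnorm (A *\<^sub>v x))\<^sup>2 \<le> (vnorm a)\<^sup>2 + lam\<^sup>2 * (vnorm b)\<^sup>2"
proof -
  define S where "S = eigenspace_mat n A 1"
  have Ac: "A \<in> carrier_mat n n" and Pc: "P \<in> carrier_mat n n"
    using A P unfolding hermitian_mat_def orth_proj_onto_def by auto
  have aS: "a \<in> S" and b_orth: "\<forall>w\<in>S. b \<bullet>c w = 0"
    using P x unfolding orth_proj_onto_def a_def b_def S_def by auto
  then have ac: "a \<in> carrier_vec n" and Aa: "A *\<^sub>v a = a"
    unfolding S_def eigenspace_mat_def by auto
  have bc: "b \<in> carrier_vec n" and Abc: "A *\<^sub>v b \<in> carrier_vec n"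
    unfolding b_def using x ac Ac a_def by auto
  have x_split: "x = a + b"
    unfolding b_def a_def using x Pc by (intro eq_vecI) auto
  show Ax_split: "A *\<^sub>v x = a + A *\<^sub>v b"
    by (subst x_split) (simp add: mult_add_distrib_mat_vec[OF Ac ac bc] Aa)
  show Ab: "vnorm (A *\<^sub>v b) \<le> lam * vnorm b"
    using vnorm_hermitian_mat_orthogonal_eigenspace_le[OF A ev \<open>0 \<le> lam\<close> P bc] b_orth S_def
    by simp
  show "(vnorm x)\<^sup>2 = (vnorm a)\<^sup>2 + (vnorm b)\<^sup>2"
    using cscalar_prod_swap[OF bc ac] b_orth aS
    by (subst x_split) (intro vnorm_add_power2_orthogonal[OF ac bc], simp)
  have "\<forall>w\<in>S. (A *\<^sub>v b) \<bullet>c w = 0"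
    unfolding S_def using hermitian_mat_orthogonal_eigenspace[OF A bc] b_orth S_def by simp
  then have "(vnorm (A *\<^sub>v x))\<^sup>2 = (vnorm a)\<^sup>2 + (vnorm (A *\<^sub>v b))\<^sup>2"
    unfolding Ax_split using cscalar_prod_swap[OF Abc ac] aS
    by (intro vnorm_add_power2_orthogonal[OF ac Abc]) simp
  then show "(vnorm (A *\<^sub>v x))\<^sup>2 \<le> (vnorm a)\<^sup>2 + lam\<^sup>2 * (vnorm b)\<^sup>2"
    using power_mono[OF Ab vnorm_nonneg, of 2] by (simp add: power_mult_distrib)
qed

lemma cmod_mult_vnorm_le_orth_proj_unitary:
  assumes U: "unitary_mat n U" and P: "orth_proj_onto n P S"
    and a: "a \<in> carrier_vec n" and c: "c \<in> carrier_vec n" and eq: "P *\<^sub>v (U *\<^sub>v (a + c)) = \<mu> \<cdot>\<^sub>v a"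
  shows "cmod \<mu> * vnorm a \<le> vnorm (P *\<^sub>v (U *\<^sub>v a)) + vnorm c"
proof -
  have Uc: "U \<in> carrier_mat n n" and Pc: "P \<in> carrier_mat n n"
    using U P unfolding unitary_mat_def orth_proj_onto_def by auto
  have "\<mu> \<cdot>\<^sub>v a = P *\<^sub>v (U *\<^sub>v a) + P *\<^sub>v (U *\<^sub>v c)"
    using eq Uc Pc a c by (simp add: mult_add_distrib_mat_vec[of _ n n])
  then have "cmod \<mu> * vnorm a \<le> vnorm (P *\<^sub>v (U *\<^sub>v a)) + vnorm (P *\<^sub>v (U *\<^sub>v c))"
    using vnorm_triangle[of "P *\<^sub>v (U *\<^sub>v a)" n "P *\<^sub>v (U *\<^sub>v c)"] Pc Uc a c
    by (simp add: vnorm_smult[symmetric])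
  also have "vnorm (P *\<^sub>v (U *\<^sub>v c)) \<le> vnorm c"
    using vnorm_orth_proj_onto_le[OF P, of "U *\<^sub>v c"] unitary_mat_vnorm[OF U c] Uc c by simp
  finally show ?thesis
    by simp
qed

lemma eigenvalue_unitary_mult_hermitian_le:
  assumes U: "unitary_mat n U" and A: "hermitian_mat n A"
    and ev: "\<And>\<mu>. eigenvalue A \<mu> \<Longrightarrow> \<mu> \<noteq> 1 \<Longrightarrow> cmod \<mu> \<le> lam" and lam: "0 \<le> lam" "lam \<le> 1"
    and P: "orth_proj_onto n P (eigenspace_mat n A 1)"
    and PU: "\<And>v. v \<in> eigenspace_mat n A 1 \<Longrightarrow> vnorm (P *\<^sub>v (U *\<^sub>v v)) \<le> d * vnorm v"
    and d: "0 \<le> d" "d < 1"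
    and \<mu>: "eigenvalue (U * A) \<mu>"
  shows "cmod \<mu> \<le> spectral_radius_bound lam d"
proof -
  have Uc: "U \<in> carrier_mat n n" and Ac: "A \<in> carrier_mat n n" and Pc: "P \<in> carrier_mat n n"
    using U A P unfolding unitary_mat_def hermitian_mat_def orth_proj_onto_def by auto
  obtain x where x: "x \<in> carrier_vec n" "x \<noteq> 0\<^sub>v n" "U *\<^sub>v (A *\<^sub>v x) = \<mu> \<cdot>\<^sub>v x"
    using \<mu> Uc Ac unfolding eigenvalue_def eigenvector_def by auto
  define a where "a = P *\<^sub>v x"
  define b where "b = x - P *\<^sub>v x"
  note split = hermitian_mat_orth_proj_eigenspace_split[OF A ev lam(1) P x(1), folded a_def b_def]
  have "a \<in> eigenspace_mat n A 1"
    using P x(1) unfolding orth_proj_onto_def a_def by auto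
  then have a: "a \<in> carrier_vec n" "vnorm (P *\<^sub>v (U *\<^sub>v a)) \<le> d * vnorm a"
    using PU eigenspace_mat_subset_carrier[of n A 1] by auto
  have "0 < vnorm x"
    using x vnorm_eq_0_iff[OF x(1)] vnorm_nonneg[of x] by linarith
  moreover note split(3)
  moreover have "(cmod \<mu>)\<^sup>2 * (vnorm x)\<^sup>2 \<le> (vnorm a)\<^sup>2 + lam\<^sup>2 * (vnorm b)\<^sup>2"
    using unitary_mat_vnorm[OF U, of "A *\<^sub>v x"] x Ac split(4)
    by (simp add: vnorm_smult power_mult_distrib[symmetric])
  moreover have "cmod \<mu> * vnorm a \<le> d * vnorm a + vnorm b"
  proof -
    have "P *\<^sub>v (U *\<^sub>v (a + A *\<^sub>v b)) = P *\<^sub>v (\<mu> \<cdot>\<^sub>v x)"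
      using split(1) x(3) by simp
    also have "\<dots> = \<mu> \<cdot>\<^sub>v a"
      unfolding a_def by (rule mult_mat_vec[OF Pc x(1)])
    finally have "cmod \<mu> * vnorm a \<le> vnorm (P *\<^sub>v (U *\<^sub>v a)) + vnorm (A *\<^sub>v b)"
      using a(1) Ac Pc x(1) unfolding b_def by (intro cmod_mult_vnorm_le_orth_proj_unitary[OF U P]) auto
    then show ?thesis
      using a(2) split(2) mult_left_le_one_le[OF vnorm_nonneg lam, of b] by linarith
  qed
  ultimately show ?thesis
    by (rule le_spectral_radius_bound[OF _ vnorm_nonneg vnorm_nonneg _ norm_ge_zero _ _ lam d])
qed

theorem mainTheorem10:
  fixes lam d :: real
  assumes "0 \<le> lam" "lam < 1" "0 \<le> d" "d < 1"
  shows "\<exists>f :: real. f < 1 \<and>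
    (\<forall>(n::nat) (U::complex mat) (A::complex mat) (P::complex mat).
       unitary_mat n U \<longrightarrow> hermitian_mat n A \<longrightarrow>
       eigenvalue A 1 \<longrightarrow>
       (\<forall>\<mu>. eigenvalue A \<mu> \<and> \<mu> \<noteq> 1 \<longrightarrow> cmod \<mu> \<le> lam) \<longrightarrow>
       orth_proj_onto n P (eigenspace_mat n A 1) \<longrightarrow>
       (\<forall>v \<in> eigenspace_mat n A 1. vnorm (P *\<^sub>v (U *\<^sub>v v)) \<le> d * vnorm v) \<longrightarrow>
       spectral_radius (U * A) \<le> f)"
proof (intro exI[of _ "spectral_radius_bound lam d"] conjI allI impI)
  show "spectral_radius_bound lam d < 1"
    using assms by (rule spectral_radius_bound_less_1)
  fix n U A P
  assume U: "unitary_mat n U" and A: "hermitian_mat n A" and "eigenvalue A 1"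
    and ev: "\<forall>\<mu>. eigenvalue A \<mu> \<and> \<mu> \<noteq> 1 \<longrightarrow> cmod \<mu> \<le> lam"
    and P: "orth_proj_onto n P (eigenspace_mat n A 1)"
    and PU: "\<forall>v \<in> eigenspace_mat n A 1. vnorm (P *\<^sub>v (U *\<^sub>v v)) \<le> d * vnorm v"
  have Ac: "A \<in> carrier_mat n n" and UA: "U * A \<in> carrier_mat n n"
    using U A unfolding unitary_mat_def hermitian_mat_def by auto
  obtain \<mu> where "eigenvalue (U * A) \<mu>" and "spectral_radius (U * A) = cmod \<mu>"
    using spectral_radius_mem_max(1)[OF UA eigenvalue_imp_nonzero_dim[OF Ac \<open>eigenvalue A 1\<close>]]
    unfolding spectrum_def by auto
  moreover have "cmod \<mu> \<le> spectral_radius_bound lam d"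
    using U A ev P PU assms \<open>eigenvalue (U * A) \<mu>\<close>
    by (intro eigenvalue_unitary_mult_hermitian_le[of n U A lam P d]) auto
  ultimately show "spectral_radius (U * A) \<le> spectral_radius_bound lam d"
    by simp
qed

end
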